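(* Let $M\in\mathbb{W}^{n\times n}$ and let $\mathcal{I}_m\subseteq\mathcal{I}_{m-1}\subseteq\dots\subseteq\mathcal{I}_1\subseteq\{1,\dots,n\}$ with $\mathcal{I}_m$ nonempty. If the principal submatrix of $M$ indexed by $\{1,\dots,n\}\setminus\mathcal{I}_m$ is upper triangular with nonzero diagonal, then the successive reduction $r(M;\mathcal{I}_1,\dots,\mathcal{I}_{m-1},\mathcal{I}_m)$ is defined and $r(M;\mathcal{I}_1,\dots,\mathcal{I}_{m-1},\mathcal{I}_m)=r(M;\mathcal{I}_m)$.
   Context: $\mathbb{W}$ is the field of rational functions in a complex variable $\lambda$ with complex coefficients. For $M\in\mathbb{W}^{n\times n}$ and an index set $\mathcal{I}=\{i_1<\dots<i_k\}\subseteq\{1,\dots,n\}$, the principal submatrix indexed by $\mathcal{I}$ is the $k\times k$ matrix with $(s,t)$ entry $M_{i_si_t}$ (indices kept in increasing order; "upper triangular" refers to this order). For nonempty $\mathcal{I}$ with complement $\bar{\mathcal{I}}=\{1,\dots,n\}\setminus\mathcal{I}$: if $\mathcal{I}=\{1,\dots,n\}$ set $r(M;\mathcal{I})=M$; otherwise let $A$ be the principal submatrix indexed by $\bar{\mathcal{I}}$, $D$ that indexed by $\mathcal{I}$, $B$ the submatrix with rows $\bar{\mathcal{I}}$ and columns $\mathcal{I}$, $C$ the submatrix with rows $\mathcal{I}$ and columns $\bar{\mathcal{I}}$; if $A$ is invertible, the reduction of $M$ over $\mathcal{I}$ is $r(M;\mathcal{I})=D-CA^{-1}B$, a matrix whose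 rows and columns are indexed by the elements of $\mathcal{I}$ in increasing order. For $\mathcal{J}\subseteq\mathcal{I}$ define $r(M;\mathcal{I},\mathcal{J})=r(r(M;\mathcal{I});\mathcal{J})$ (with $\mathcal{J}$ read as a set of indices of $r(M;\mathcal{I})$), and similarly for longer nested sequences, provided each step is defined. *)

theory Defs
  imports "HOL-Computational_Algebra.Polynomial" "HOL-Computational_Algebra.Fraction_Field"
begin

type_synonym W = "complex poly fract"

text \<open>Matrices are represented with labelled rows/columns: a matrix with index set S
  (a finite set of naturals, ordered increasingly) is a function nat => nat => 'a,
  of which only the entries with both indices in S are meaningful.\<close>

definition lmat_invertible :: "nat set \<Rightarrow> (nat \<Rightarrow> nat \<Rightarrow> 'a::field) \<Rightarrow> bool" where
  "lmat_invertible S A \<longleftrightarrow> (\<exists>B. (\<forall>i\<in>S. \<forall>j\<in>S.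
       (\<Sum>k\<in>S. A i k * B k j) = (if i = j then 1 else 0) \<and>
       (\<Sum>k\<in>S. B i k * A k j) = (if i = j then 1 else 0)))"

definition lmat_inv :: "nat set \<Rightarrow> (nat \<Rightarrow> nat \<Rightarrow> 'a::field) \<Rightarrow> (nat \<Rightarrow> nat \<Rightarrow> 'a)" where
  "lmat_inv S A = (SOME B. \<forall>i\<in>S. \<forall>j\<in>S.
       (\<Sum>k\<in>S. A i k * B k j) = (if i = j then 1 else 0) \<and>
       (\<Sum>k\<in>S. B i k * A k j) = (if i = j then 1 else 0))"

definition red_defined :: "nat set \<Rightarrow> (nat \<Rightarrow> nat \<Rightarrow> 'a::field) \<Rightarrow> nat set \<Rightarrow> bool" where
  "red_defined U M I \<longleftrightarrow> I \<noteq> {} \<and> I \<subseteq> U \<and> (I = U \<or> lmat_invertible (U - I) M)"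

text \<open>r(M;I) = D - C A^{-1} B (or M if I = U), as a matrix with index set I
  (entries outside I x I set to 0).\<close>
definition red :: "nat set \<Rightarrow> (nat \<Rightarrow> nat \<Rightarrow> 'a::field) \<Rightarrow> nat set \<Rightarrow> (nat \<Rightarrow> nat \<Rightarrow> 'a)" where
  "red U M I = (\<lambda>i j. if i \<in> I \<and> j \<in> I then
       (if I = U then M i j
        else M i j - (\<Sum>k\<in>U - I. \<Sum>l\<in>U - I. M i k * lmat_inv (U - I) M k l * M l j))
     else 0)"

fun sred :: "nat set \<Rightarrow> (nat \<Rightarrow> nat \<Rightarrow> 'a::field) \<Rightarrow> nat set list \<Rightarrow> (nat \<Rightarrow> nat \<Rightarrow> 'a) option" where
  "sred U M [] = Some M"
| "sred U M (I # Is) = (if red_defined U M I then sred I (red U M I) Is else None)"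

end

theory Submission
  imports Defs
begin

text \<open>The reduction \<open>r(M;I)\<close> is the Schur complement of the block \<open>M\<^sub>U\<^sub>-\<^sub>I\<close>: it describes
  \<open>M\<close> on the vectors \<open>z\<close> with \<open>(M z)\<^sub>k = 0\<close> for \<open>k \<in> U - I\<close>, and every vector on \<open>I\<close> extends
  uniquely to such a \<open>z\<close>. Reducing to \<open>I\<close> and then to \<open>L \<subseteq> I\<close> therefore describes \<open>M\<close> on the
  vectors killed by the rows in \<open>U - L\<close>, i.e. gives \<open>r(M;L)\<close>. Upper triangularity with nonzero
  diagonal on \<open>U - L\<close> makes all the blocks involved invertible, and it survives the reduction
  to \<open>I\<close> on \<open>I - L\<close>, so induction along the chain applies.\<close>

definition lmat_is_inverse :: "nat set \<Rightarrow> (nat \<Rightarrow> nat \<Rightarrow> 'a::field) \<Rightarrow> (nat \<Rightarrow> nat \<Rightarrow> 'a) \<Rightarrow> bool" where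
  "lmat_is_inverse S A B \<longleftrightarrow> (\<forall>i\<in>S. \<forall>j\<in>S.
       (\<Sum>k\<in>S. A i k * B k j) = (if i = j then 1 else 0) \<and>
       (\<Sum>k\<in>S. B i k * A k j) = (if i = j then 1 else 0))"

definition upper_triangular_on :: "nat set \<Rightarrow> (nat \<Rightarrow> nat \<Rightarrow> 'a::zero) \<Rightarrow> bool" where
  "upper_triangular_on S A \<longleftrightarrow> (\<forall>i\<in>S. \<forall>j\<in>S. j < i \<longrightarrow> A i j = 0)"

lemma upper_triangular_on_subset:
  "upper_triangular_on S A \<Longrightarrow> T \<subseteq> S \<Longrightarrow> upper_triangular_on T A"
  unfolding upper_triangular_on_def by blast

lemma lmat_invertible_iff_is_inverse: "lmat_invertible S A \<longleftrightarrow> (\<exists>B. lmat_is_inverse S A B)"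
  by (simp add: lmat_invertible_def lmat_is_inverse_def)

lemma lmat_is_inverse_lmat_inv: "lmat_invertible S A \<Longrightarrow> lmat_is_inverse S A (lmat_inv S A)"
  unfolding lmat_invertible_iff_is_inverse lmat_inv_def lmat_is_inverse_def[symmetric]
  by (metis someI_ex)

lemma sum_kronecker_right:
  "finite S \<Longrightarrow> j \<in> S \<Longrightarrow> (\<Sum>k\<in>S. f k * (if k = j then 1 else 0)) = (f j :: 'a::semiring_1)"
  by (simp add: if_distrib cong: if_cong)

lemma sum_kronecker_left:
  "finite S \<Longrightarrow> j \<in> S \<Longrightarrow> (\<Sum>k\<in>S. (if j = k then 1 else 0) * f k) = (f j :: 'a::semiring_1)"
  by (simp add: if_distrib[where f = "\<lambda>c. c * _"] cong: if_cong)

lemma sum_sum_product_assoc: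
  "(\<Sum>k\<in>S. a k * (\<Sum>l\<in>T. b k l * c l)) = (\<Sum>l\<in>T. (\<Sum>k\<in>S. a k * b k l) * (c l :: 'a::comm_semiring_0))"
proof -
  have "(\<Sum>k\<in>S. a k * (\<Sum>l\<in>T. b k l * c l)) = (\<Sum>k\<in>S. \<Sum>l\<in>T. a k * b k l * c l)"
    by (simp add: sum_distrib_left mult.assoc)
  also have "\<dots> = (\<Sum>l\<in>T. \<Sum>k\<in>S. a k * b k l * c l)"
    by (rule sum.swap)
  also have "\<dots> = (\<Sum>l\<in>T. (\<Sum>k\<in>S. a k * b k l) * c l)"
    by (simp add: sum_distrib_right)
  finally show ?thesis .
qed

lemma lmat_inv_eqI:
  assumes fin: "finite S" and B: "lmat_is_inverse S A B" and i: "i \<in> S" and j: "j \<in> S"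
  shows "lmat_inv S A i j = B i j"
proof -
  let ?L = "lmat_inv S A"
  have L: "lmat_is_inverse S A ?L"
    using B by (intro lmat_is_inverse_lmat_inv) (auto simp: lmat_invertible_iff_is_inverse)
  have "?L i j = (\<Sum>k\<in>S. ?L i k * (if k = j then 1 else 0))"
    using fin j by (simp add: sum_kronecker_right)
  also have "\<dots> = (\<Sum>k\<in>S. ?L i k * (\<Sum>l\<in>S. A k l * B l j))"
    using B j by (intro sum.cong) (auto simp: lmat_is_inverse_def)
  also have "\<dots> = (\<Sum>l\<in>S. (\<Sum>k\<in>S. ?L i k * A k l) * B l j)"
    by (rule sum_sum_product_assoc)
  also have "\<dots> = (\<Sum>l\<in>S. (if i = l then 1 else 0) * B l j)"
    using L i by (intro sum.cong) (auto simp: lmat_is_inverse_def)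
  also have "\<dots> = B i j"
    using fin i by (simp add: sum_kronecker_left)
  finally show ?thesis .
qed

text \<open>The inverse of the block matrix with blocks \<open>A\<^sub>S\<close>, column \<open>c = A\<^sub>S\<^sub>m\<close>, zero row and
  corner \<open>d = A m m\<close>, given an inverse \<open>B\<close> of \<open>A\<^sub>S\<close>: blocks \<open>B\<close>, \<open>-B c / d\<close>, \<open>0\<close>, \<open>1 / d\<close>.\<close>
definition lmat_inv_extend ::
    "nat set \<Rightarrow> (nat \<Rightarrow> nat \<Rightarrow> 'a::field) \<Rightarrow> (nat \<Rightarrow> nat \<Rightarrow> 'a) \<Rightarrow> nat \<Rightarrow> nat \<Rightarrow> nat \<Rightarrow> 'a" where
  "lmat_inv_extend S A B m i j =
     (if i = m then (if j = m then 1 / A m m else 0)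
      else if j = m then - (\<Sum>k\<in>S. B i k * A k m) / A m m else B i j)"

context
  fixes S :: "nat set" and A B :: "nat \<Rightarrow> nat \<Rightarrow> 'a::field" and m :: nat
  assumes fin: "finite S" and m: "m \<notin> S" and row: "\<forall>k\<in>S. A m k = 0"
    and corner: "A m m \<noteq> 0" and B: "lmat_is_inverse S A B"
begin

private abbreviation "E \<equiv> lmat_inv_extend S A B m"

private lemma sum_insert_m: "(\<Sum>k\<in>insert m S. f k) = f m + (\<Sum>k\<in>S. f k)"
  using fin m by simp

private lemma extend_on_S: "i \<in> S \<Longrightarrow> j \<in> S \<Longrightarrow> E i j = B i j"
  using m by (auto simp: lmat_inv_extend_def)

lemma lmat_inv_extend_right_inverse:
  assumes i: "i \<in> insert m S" and j: "j \<in> insert m S"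
  shows "(\<Sum>k\<in>insert m S. A i k * E k j) = (if i = j then 1 else 0)"
proof (cases "j = m")
  case False
  then have jS: "j \<in> S" using j by auto
  have "(\<Sum>k\<in>S. A i k * E k j) = (\<Sum>k\<in>S. A i k * B k j)"
    using jS by (intro sum.cong) (auto simp: extend_on_S)
  then have "(\<Sum>k\<in>insert m S. A i k * E k j) = (\<Sum>k\<in>S. A i k * B k j)"
    using False by (simp add: sum_insert_m lmat_inv_extend_def)
  also have "\<dots> = (if i = j then 1 else 0)"
    using B row i jS m by (cases "i = m") (auto simp: lmat_is_inverse_def)
  finally show ?thesis .
next
  case True
  show ?thesis
  proof (cases "i = m")
    case True
    then show ?thesis using \<open>j = m\<close> row corner by (simp add: sum_insert_m lmat_inv_extend_def)
  next
    case False
    then have iS: "i \<in> S" using i by auto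
    have "(\<Sum>k\<in>S. A i k * E k m) = (\<Sum>k\<in>S. - (A i k * (\<Sum>l\<in>S. B k l * A l m)) / A m m)"
      using m by (intro sum.cong) (auto simp: lmat_inv_extend_def)
    also have "\<dots> = - (\<Sum>k\<in>S. A i k * (\<Sum>l\<in>S. B k l * A l m)) / A m m"
      by (simp only: sum_divide_distrib[symmetric] sum_negf)
    also have "(\<Sum>k\<in>S. A i k * (\<Sum>l\<in>S. B k l * A l m)) = (\<Sum>l\<in>S. (\<Sum>k\<in>S. A i k * B k l) * A l m)"
      by (rule sum_sum_product_assoc)
    also have "\<dots> = (\<Sum>l\<in>S. (if i = l then 1 else 0) * A l m)"
      using B iS by (intro sum.cong) (auto simp: lmat_is_inverse_def)
    also have "\<dots> = A i m"
      using fin iS by (simp add: sum_kronecker_left)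
    finally show ?thesis
      using True False corner by (simp add: sum_insert_m lmat_inv_extend_def)
  qed
qed

lemma lmat_inv_extend_left_inverse:
  assumes i: "i \<in> insert m S" and j: "j \<in> insert m S"
  shows "(\<Sum>k\<in>insert m S. E i k * A k j) = (if i = j then 1 else 0)"
proof (cases "i = m")
  case True
  have "(\<Sum>k\<in>S. E m k * A k j) = 0"
    using m by (intro sum.neutral) (auto simp: lmat_inv_extend_def)
  then show ?thesis
    using True j row corner by (auto simp: sum_insert_m lmat_inv_extend_def)
next
  case False
  then have iS: "i \<in> S" using i by auto
  have on_S: "(\<Sum>k\<in>S. E i k * A k j) = (\<Sum>k\<in>S. B i k * A k j)"
    using iS by (intro sum.cong) (auto simp: extend_on_S)
  show ?thesis
  proof (cases "j = m")
    case True
    then show ?thesis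
      using False corner on_S by (simp add: sum_insert_m lmat_inv_extend_def)
  next
    case False
    then have jS: "j \<in> S" using j by auto
    then show ?thesis
      using on_S row B iS by (simp add: sum_insert_m lmat_is_inverse_def)
  qed
qed

lemma lmat_is_inverse_extend: "lmat_is_inverse (insert m S) A E"
  by (simp add: lmat_is_inverse_def lmat_inv_extend_right_inverse lmat_inv_extend_left_inverse)

end

lemma upper_triangular_on_has_inverse:
  fixes A :: "nat \<Rightarrow> nat \<Rightarrow> 'a::field"
  assumes "finite S" and "upper_triangular_on S A" and "\<forall>i\<in>S. A i i \<noteq> 0"
  shows "\<exists>B. lmat_is_inverse S A B \<and> upper_triangular_on S B"
  using assms
proof (induction S rule: finite_linorder_max_induct)
  case empty
  then show ?case by (auto simp: lmat_is_inverse_def upper_triangular_on_def)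
next
  case (insert m S)
  then obtain B where B: "lmat_is_inverse S A B" and B_tri: "upper_triangular_on S B"
    by (meson upper_triangular_on_subset subset_insertI insert_iff)
  have m: "m \<notin> S" and row: "\<forall>k\<in>S. A m k = 0"
    using insert.hyps insert.prems(1) by (auto simp: upper_triangular_on_def)
  have "upper_triangular_on (insert m S) (lmat_inv_extend S A B m)"
    using B_tri insert.hyps by (auto simp: upper_triangular_on_def lmat_inv_extend_def)
  then show ?case
    using lmat_is_inverse_extend[OF insert.hyps(1) m row _ B] insert.prems(2) by blast
qed

lemma upper_triangular_on_invertible:
  fixes A :: "nat \<Rightarrow> nat \<Rightarrow> 'a::field"
  assumes "finite S" and "upper_triangular_on S A" and "\<forall>i\<in>S. A i i \<noteq> 0"
  shows "lmat_invertible S A" and "upper_triangular_on S (lmat_inv S A)"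
proof -
  obtain B where B: "lmat_is_inverse S A B" and B_tri: "upper_triangular_on S B"
    using upper_triangular_on_has_inverse[OF assms] by blast
  then show "lmat_invertible S A"
    by (auto simp: lmat_invertible_iff_is_inverse)
  show "upper_triangular_on S (lmat_inv S A)"
    using B_tri lmat_inv_eqI[OF \<open>finite S\<close> B] by (simp add: upper_triangular_on_def)
qed

lemma red_apply:
  "i \<in> I \<Longrightarrow> j \<in> I \<Longrightarrow>
    red U M I i j = M i j - (\<Sum>k\<in>U - I. \<Sum>l\<in>U - I. M i k * lmat_inv (U - I) M k l * M l j)"
  by (auto simp: red_def)

lemma red_apply_on_kernel:
  fixes M :: "nat \<Rightarrow> nat \<Rightarrow> 'a::field"
  assumes fin: "finite U" and IU: "I \<subseteq> U" and inv: "lmat_invertible (U - I) M"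
    and z: "\<forall>k\<in>U - I. (\<Sum>j\<in>U. M k j * z j) = 0" and i: "i \<in> I"
  shows "(\<Sum>j\<in>U. M i j * z j) = (\<Sum>j\<in>I. red U M I i j * z j)"
proof -
  let ?S = "U - I" and ?A = "lmat_inv (U - I) M"
  have A: "lmat_is_inverse ?S M ?A"
    using inv by (rule lmat_is_inverse_lmat_inv)
  have finS: "finite ?S"
    using fin by simp
  have split: "(\<Sum>j\<in>U. f j) = (\<Sum>j\<in>I. f j) + (\<Sum>j\<in>?S. f j)" for f :: "nat \<Rightarrow> 'a"
    using sum.subset_diff[OF IU fin, of f] by (simp add: add.commute)
  define b where "b l = (\<Sum>j\<in>I. M l j * z j)" for l
  have z_outside: "z k = - (\<Sum>l\<in>?S. ?A k l * b l)" if k: "k \<in> ?S" for k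
  proof -
    have Mz: "(\<Sum>m\<in>?S. M l m * z m) = - b l" if "l \<in> ?S" for l
      using z that split[of "\<lambda>j. M l j * z j"] by (simp add: b_def eq_neg_iff_add_eq_0 add.commute)
    have "z k = (\<Sum>m\<in>?S. (if k = m then 1 else 0) * z m)"
      using finS k by (simp add: sum_kronecker_left)
    also have "\<dots> = (\<Sum>m\<in>?S. (\<Sum>l\<in>?S. ?A k l * M l m) * z m)"
      using A k by (intro sum.cong) (auto simp: lmat_is_inverse_def)
    also have "\<dots> = (\<Sum>l\<in>?S. ?A k l * (\<Sum>m\<in>?S. M l m * z m))"
      by (rule sum_sum_product_assoc[symmetric])
    also have "\<dots> = (\<Sum>l\<in>?S. ?A k l * - b l)"
      using Mz by (intro sum.cong) auto
    finally show ?thesis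
      by (simp add: sum_negf)
  qed
  have "(\<Sum>k\<in>?S. M i k * z k) = (\<Sum>k\<in>?S. - (M i k * (\<Sum>l\<in>?S. ?A k l * b l)))"
    using z_outside by (intro sum.cong) auto
  also have "\<dots> = - (\<Sum>k\<in>?S. M i k * (\<Sum>l\<in>?S. ?A k l * b l))"
    by (rule sum_negf)
  also have "\<dots> = - (\<Sum>j\<in>I. (\<Sum>k\<in>?S. \<Sum>l\<in>?S. M i k * ?A k l * M l j) * z j)"
    by (simp add: b_def sum_distrib_left sum_distrib_right mult.assoc sum.swap[of _ I] sum.swap[of _ I ?S])
  finally show ?thesis
    using i by (simp add: split red_apply left_diff_distrib sum_subtractf cong: sum.cong)
qed

lemma red_kernel_extension_exists:
  fixes M :: "nat \<Rightarrow> nat \<Rightarrow> 'a::field"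
  assumes fin: "finite U" and IU: "I \<subseteq> U" and inv: "lmat_invertible (U - I) M"
  shows "\<exists>z. (\<forall>j\<in>I. z j = x j) \<and> (\<forall>k\<in>U - I. (\<Sum>j\<in>U. M k j * z j) = 0)"
proof -
  let ?S = "U - I" and ?A = "lmat_inv (U - I) M"
  have A: "lmat_is_inverse ?S M ?A"
    using inv by (rule lmat_is_inverse_lmat_inv)
  have finS: "finite ?S"
    using fin by simp
  define b where "b l = (\<Sum>j\<in>I. M l j * x j)" for l
  define z where "z k = (if k \<in> I then x k else - (\<Sum>l\<in>?S. ?A k l * b l))" for k
  have "(\<Sum>j\<in>U. M k j * z j) = 0" if k: "k \<in> ?S" for k
  proof -
    have "(\<Sum>j\<in>U. M k j * z j) = b k - (\<Sum>m\<in>?S. M k m * (\<Sum>l\<in>?S. ?A m l * b l))"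
      using sum.subset_diff[OF IU fin, of "\<lambda>j. M k j * z j"]
      by (simp add: b_def z_def sum_negf)
    also have "(\<Sum>m\<in>?S. M k m * (\<Sum>l\<in>?S. ?A m l * b l)) = (\<Sum>l\<in>?S. (\<Sum>m\<in>?S. M k m * ?A m l) * b l)"
      by (rule sum_sum_product_assoc)
    also have "\<dots> = (\<Sum>l\<in>?S. (if k = l then 1 else 0) * b l)"
      using A k by (intro sum.cong) (auto simp: lmat_is_inverse_def)
    also have "\<dots> = b k"
      using finS k by (simp add: sum_kronecker_left)
    finally show ?thesis by simp
  qed
  then show ?thesis
    by (intro exI[of _ z]) (simp add: z_def)
qed

text \<open>Quotient formula for Schur complements: both sides describe \<open>M\<close> on the vectors killed
  by the rows in \<open>U - L\<close>; evaluating at the extension of the unit vector \<open>e\<^sub>j\<close> compares entries.\<close>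
lemma red_red:
  fixes M :: "nat \<Rightarrow> nat \<Rightarrow> 'a::field"
  assumes fin: "finite U" and LI: "L \<subseteq> I" and IU: "I \<subseteq> U"
    and inv_I: "lmat_invertible (U - I) M" and inv_IL: "lmat_invertible (I - L) (red U M I)"
    and inv_L: "lmat_invertible (U - L) M"
  shows "red I (red U M I) L = red U M L"
proof (intro ext)
  fix i j :: nat
  let ?R = "red U M I" and ?e = "\<lambda>k. if k = j then 1 else (0::'a)"
  have finI: "finite I" and finL: "finite L"
    using fin IU LI by (auto intro: finite_subset)
  show "red I ?R L i j = red U M L i j"
  proof (cases "i \<in> L \<and> j \<in> L")
    case False
    then show ?thesis by (auto simp: red_def)
  next
    case True
    obtain w where w_L: "\<forall>k\<in>L. w k = ?e k" and w_ker: "\<forall>k\<in>I - L. (\<Sum>m\<in>I. ?R k m * w m) = 0"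
      using red_kernel_extension_exists[OF finI LI inv_IL, of ?e] by blast
    obtain z where z_I: "\<forall>k\<in>I. z k = w k" and z_ker: "\<forall>k\<in>U - I. (\<Sum>m\<in>U. M k m * z m) = 0"
      using red_kernel_extension_exists[OF fin IU inv_I] by blast
    have Mz_I: "(\<Sum>m\<in>U. M k m * z m) = (\<Sum>m\<in>I. ?R k m * w m)" if "k \<in> I" for k
      using red_apply_on_kernel[OF fin IU inv_I z_ker that] z_I by simp
    have z_ker_L: "\<forall>k\<in>U - L. (\<Sum>m\<in>U. M k m * z m) = 0"
      using Mz_I w_ker z_ker by (metis Diff_iff)
    have "red U M L i j = (\<Sum>m\<in>L. red U M L i m * z m)"
      using finL True z_I w_L LI by (simp add: subset_iff sum_kronecker_right cong: sum.cong)
    also have "\<dots> = (\<Sum>m\<in>U. M i m * z m)"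
      using red_apply_on_kernel[OF fin order.trans[OF LI IU] inv_L z_ker_L] True by simp
    also have "\<dots> = (\<Sum>m\<in>I. ?R i m * w m)"
      using Mz_I True LI by blast
    also have "\<dots> = (\<Sum>m\<in>L. red I ?R L i m * w m)"
      using red_apply_on_kernel[OF finI LI inv_IL w_ker] True by blast
    also have "\<dots> = red I ?R L i j"
      using finL True w_L by (simp add: sum_kronecker_right cong: sum.cong)
    finally show ?thesis ..
  qed
qed

text \<open>A correction term \<open>M i k A\<^sup>-\<^sup>1 k l M l j\<close> can only be nonzero if \<open>i \<le> k \<le> l \<le> j\<close>, which forces \<open>k = i \<notin> U - I\<close>.\<close>
lemma red_eq_on_lower_part:
  fixes M :: "nat \<Rightarrow> nat \<Rightarrow> 'a::field"
  assumes fin: "finite U" and LI: "L \<subseteq> I" and IU: "I \<subseteq> U"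
    and tri: "upper_triangular_on (U - L) M" and diag: "\<forall>i\<in>U - L. M i i \<noteq> 0"
    and i: "i \<in> I - L" and j: "j \<in> I - L" and ji: "j \<le> i"
  shows "red U M I i j = M i j"
proof -
  let ?S = "U - I" and ?A = "lmat_inv (U - I) M"
  have sub: "?S \<subseteq> U - L"
    using LI by auto
  have A_tri: "upper_triangular_on ?S ?A"
    using upper_triangular_on_invertible(2)[of ?S M] fin sub tri diag
    by (meson finite_Diff upper_triangular_on_subset subsetD)
  have "M i k * ?A k l * M l j = 0" if k: "k \<in> ?S" and l: "l \<in> ?S" for k l
  proof -
    have "k \<noteq> i"
      using i k by auto
    then have "k < i \<or> l < k \<or> j < l"
      using ji by linarith
    moreover have "i \<in> U - L" "j \<in> U - L" "k \<in> U - L" "l \<in> U - L"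
      using i j k l IU sub by auto
    ultimately show ?thesis
      using tri A_tri k l by (auto simp: upper_triangular_on_def)
  qed
  then have "(\<Sum>k\<in>?S. \<Sum>l\<in>?S. M i k * ?A k l * M l j) = 0"
    by (intro sum.neutral ballI) simp
  then show ?thesis
    using i j by (simp add: red_apply)
qed

lemma sred_decreasing_chain:
  fixes M :: "nat \<Rightarrow> nat \<Rightarrow> 'a::field"
  assumes "Is \<noteq> []" and "finite U" and "hd Is \<subseteq> U" and "sorted_wrt (\<supseteq>) Is" and "last Is \<noteq> {}"
    and "upper_triangular_on (U - last Is) M" and "\<forall>i\<in>U - last Is. M i i \<noteq> 0"
  shows "red_defined U M (last Is) \<and> sred U M Is = Some (red U M (last Is))"
  using assms
proof (induction Is arbitrary: U M)
  case Nil
  then show ?case by simp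
next
  case (Cons I Is)
  let ?L = "last (I # Is)"
  have LI: "?L \<subseteq> I" and IU: "I \<subseteq> U"
    using Cons.prems(3,4) by (auto simp: last_in_set)
  have inv_L: "lmat_invertible (U - ?L) M"
    using upper_triangular_on_invertible(1) Cons.prems(2,6,7) by blast
  have defined_L: "red_defined U M ?L"
    using inv_L LI IU Cons.prems(5) by (auto simp: red_defined_def)
  show ?case
  proof (cases "Is = []")
    case True
    then show ?thesis using defined_L by simp
  next
    case False
    then have L: "last Is = ?L" and hd_I: "hd Is \<subseteq> I"
      using Cons.prems(4) by (auto simp: hd_in_set)
    have sub: "U - I \<subseteq> U - ?L"
      using LI by auto
    have inv_I: "lmat_invertible (U - I) M"
      using Cons.prems(2,6,7) sub by (intro upper_triangular_on_invertible(1))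
        (auto intro: upper_triangular_on_subset)
    have "I = U \<or> lmat_invertible (U - I) M"
      using inv_I by simp
    then have defined_I: "red_defined U M I"
      using IU LI Cons.prems(5) by (auto simp: red_defined_def)
    have red_eq: "red U M I i j = M i j" if "i \<in> I - ?L" "j \<in> I - ?L" "j \<le> i" for i j
      using red_eq_on_lower_part[OF Cons.prems(2) LI IU Cons.prems(6,7) that] .
    have I_L: "I - ?L \<subseteq> U - ?L"
      using IU by auto
    have red_tri: "upper_triangular_on (I - ?L) (red U M I)"
      using upper_triangular_on_subset[OF Cons.prems(6) I_L] red_eq
      unfolding upper_triangular_on_def by (metis less_imp_le)
    have red_diag: "\<forall>i\<in>I - ?L. red U M I i i \<noteq> 0"
      using Cons.prems(7) I_L red_eq by (metis order.refl subsetD)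
    have finI: "finite I"
      using Cons.prems(2) IU by (rule finite_subset[rotated])
    have "sred I (red U M I) Is = Some (red I (red U M I) ?L)"
      using Cons.IH[OF False finI hd_I] Cons.prems(4,5) L red_tri red_diag by simp
    moreover have "red I (red U M I) ?L = red U M ?L"
      using red_red[OF Cons.prems(2) LI IU inv_I _ inv_L] finI red_tri red_diag
        upper_triangular_on_invertible(1) by blast
    ultimately show ?thesis
      using defined_L defined_I by simp
  qed
qed

theorem lemma2:
  fixes n :: nat and M :: "nat \<Rightarrow> nat \<Rightarrow> W" and Is :: "nat set list"
  assumes "Is \<noteq> []"
    and "hd Is \<subseteq> {1..n}"
    and "\<forall>k. Suc k < length Is \<longrightarrow> Is ! Suc k \<subseteq> Is ! k"
    and "last Is \<noteq> {}"
    and "\<forall>i\<in>{1..n} - last Is. \<forall>j\<in>{1..n} - last Is. j < i \<longrightarrow> M i j = 0"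
    and "\<forall>i\<in>{1..n} - last Is. M i i \<noteq> 0"
  shows "red_defined {1..n} M (last Is) \<and> sred {1..n} M Is = Some (red {1..n} M (last Is))"
proof -
  have "sorted_wrt (\<supseteq>) Is"
    using assms(3) by (simp add: sorted_wrt_iff_nth_Suc_transp transp_on_def)
  moreover have "upper_triangular_on ({1..n} - last Is) M"
    using assms(5) by (simp add: upper_triangular_on_def)
  ultimately show ?thesis
    using sred_decreasing_chain[of Is "{1..n}" M] assms by simp
qed

end
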